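(* Let $s\geq2$, and define $f_s:\mathrm{Aut}_{s-1}(H)\to k^{\mathbb{Z}}$ by $f_s(\phi)=(\beta_n)_{n\in\mathbb{Z}}$ where $\phi(x^ny^s)=x^ny^s+\beta_n(x^{n+s}-x^n)$ for all $n\in\mathbb{Z}$. Then $f_s$ is a group homomorphism (into the additive group $k^{\mathbb{Z}}$) with $\mathrm{Ker}(f_s)=\mathrm{Aut}_s(H)$.
   Context: Let $k$ be a field and $0\neq q\in k$ not a root of unity. $H=k_q[x,x^{-1},y]$ is the $k$-algebra generated by $x,x^{-1},y$ with $xx^{-1}=x^{-1}x=1$, $yx=qxy$, a Hopf algebra with $\Delta(x)=x\otimes x$, $\Delta(y)=y\otimes x+1\otimes y$, $\varepsilon(x)=1$, $\varepsilon(y)=0$; $\{x^ny^m:n\in\mathbb{Z},m\in\mathbb{N}\}$ is a $k$-basis. $H_0=\mathrm{span}\{x^n\}$, $H(m)=H_0y^m$. $\mathrm{Aut}_c(H)$ is the group under composition of coalgebra automorphisms of $H$, and for $m\geq1$, $\mathrm{Aut}_m(H)=\{\phi\in\mathrm{Aut}_c(H):\phi(h)=h\text{ for all }h\in\sum_{i=0}^mH(i)\}$. $k^{\mathbb{Z}}$ is the group of sequences in $k$ under componentwise addition. It is a fact (proved in the paper) that for every $\phi\in\mathrm{Aut}_{s-1}(H)$ there is a unique $(\beta_n)_n\in k^{\mathbb{Z}}$ with $\phi(x^ny^s)=x^ny^s+\beta_n(x^{n+s}-x^n)$ for all $n$, so $f_s$ is well defined. *)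

theory Defs
  imports Main "HOL-Library.Poly_Mapping"
begin

text \<open>The k-vector space H with basis x^n y^m (n in Z, m in N) is modelled as the
  finitely supported functions (int * nat) =>0 k; the basis element x^n y^m is
  single (n,m) 1.  H tensor H is modelled as finitely supported functions on pairs
  of basis indices.\<close>

type_synonym 'k qH = "(int \<times> nat) \<Rightarrow>\<^sub>0 'k"
type_synonym 'k qHH = "((int \<times> nat) \<times> (int \<times> nat)) \<Rightarrow>\<^sub>0 'k"

definition mon :: "int \<Rightarrow> nat \<Rightarrow> 'k::field qH" where
  "mon n m = Poly_Mapping.single (n, m) 1"

definition scal :: "'k::field \<Rightarrow> ('a \<Rightarrow>\<^sub>0 'k) \<Rightarrow> ('a \<Rightarrow>\<^sub>0 'k)" where
  "scal c v = Poly_Mapping.map (\<lambda>a. c * a) v"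

fun qbinom :: "'k::field \<Rightarrow> nat \<Rightarrow> nat \<Rightarrow> 'k" where
  "qbinom q m 0 = 1"
| "qbinom q 0 (Suc i) = 0"
| "qbinom q (Suc m) (Suc i) = qbinom q m i + q ^ Suc i * qbinom q m (Suc i)"

definition tensor :: "'k::field qH \<Rightarrow> 'k qH \<Rightarrow> 'k qHH" where
  "tensor u v = (\<Sum>b\<in>Poly_Mapping.keys u. \<Sum>c\<in>Poly_Mapping.keys v.
      Poly_Mapping.single (b, c) (Poly_Mapping.lookup u b * Poly_Mapping.lookup v c))"

text \<open>Comultiplication on the basis:
  Delta(x^n y^m) = sum_{i<=m} [m choose i]_q x^n y^i (x) x^(n+i) y^(m-i),
  obtained from Delta(x) = x (x) x, Delta(y) = y (x) x + 1 (x) y, since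
  (1 (x) y)(y (x) x) = q (y (x) x)(1 (x) y).\<close>
definition comul_basis :: "'k::field \<Rightarrow> int \<Rightarrow> nat \<Rightarrow> 'k qHH" where
  "comul_basis q n m = (\<Sum>i\<le>m.
      Poly_Mapping.single ((n, i), (n + int i, m - i)) (qbinom q m i))"

definition comul :: "'k::field \<Rightarrow> 'k qH \<Rightarrow> 'k qHH" where
  "comul q v = (\<Sum>b\<in>Poly_Mapping.keys v. scal (Poly_Mapping.lookup v b) (comul_basis q (fst b) (snd b)))"

definition counit :: "'k::field qH \<Rightarrow> 'k" where
  "counit v = (\<Sum>b\<in>{b\<in>Poly_Mapping.keys v. snd b = 0}. Poly_Mapping.lookup v b)"

definition linear_H :: "('k::field qH \<Rightarrow> 'k qH) \<Rightarrow> bool" where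
  "linear_H \<phi> \<longleftrightarrow> (\<forall>u v. \<phi> (u + v) = \<phi> u + \<phi> v) \<and> (\<forall>c v. \<phi> (scal c v) = scal c (\<phi> v))"

text \<open>phi (x) phi applied to a tensor (for linear phi).\<close>
definition tmap :: "('k::field qH \<Rightarrow> 'k qH) \<Rightarrow> 'k qHH \<Rightarrow> 'k qHH" where
  "tmap \<phi> t = (\<Sum>p\<in>Poly_Mapping.keys t. scal (Poly_Mapping.lookup t p)
      (tensor (\<phi> (mon (fst (fst p)) (snd (fst p)))) (\<phi> (mon (fst (snd p)) (snd (snd p))))))"

definition coalg_map :: "'k::field \<Rightarrow> ('k qH \<Rightarrow> 'k qH) \<Rightarrow> bool" where
  "coalg_map q \<phi> \<longleftrightarrow> linear_H \<phi> \<and>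
     (\<forall>v. comul q (\<phi> v) = tmap \<phi> (comul q v)) \<and> (\<forall>v. counit (\<phi> v) = counit v)"

definition Aut_c :: "'k::field \<Rightarrow> ('k qH \<Rightarrow> 'k qH) set" where
  "Aut_c q = {\<phi>. bij \<phi> \<and> coalg_map q \<phi>}"

definition Hle :: "nat \<Rightarrow> 'k::field qH set" where
  "Hle m = {v. \<forall>b\<in>Poly_Mapping.keys v. snd b \<le> m}"

definition Aut_m :: "'k::field \<Rightarrow> nat \<Rightarrow> ('k qH \<Rightarrow> 'k qH) set" where
  "Aut_m q m = {\<phi>\<in>Aut_c q. \<forall>h\<in>Hle m. \<phi> h = h}"

definition f_s :: "nat \<Rightarrow> ('k::field qH \<Rightarrow> 'k qH) \<Rightarrow> int \<Rightarrow> 'k" where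
  "f_s s \<phi> = (\<lambda>n. THE \<beta>. \<phi> (mon n s) = mon n s + scal \<beta> (mon (n + int s) 0 - mon n 0))"

end

theory Submission
  imports Defs
begin

text \<open>Let \<phi> be a coalgebra map fixing every x^m y^i with i < s, and compare coefficients in
  \<Delta>(\<phi>(x^n y^s)) = (\<phi> \<otimes> \<phi>)(\<Delta>(x^n y^s)).  All middle terms of \<Delta>(x^n y^s) are fixed, so the
  right-hand side is x^n \<otimes> \<phi>(x^n y^s) + \<phi>(x^n y^s) \<otimes> x^(n+s) plus the terms
  [s, i]_q x^n y^i \<otimes> x^(n+i) y^(s-i), 0 < i < s.  Reading off coefficients kills every
  coefficient of \<phi>(x^n y^s) of positive y-degree except the one at x^n y^s, which is 1 because
  [s, 1]_q = 1 + q + ... + q^(s-1) \<noteq> 0; in y-degree 0 only x^n and x^(n+s) survive, with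
  opposite coefficients.  Hence \<phi>(x^n y^s) = x^n y^s + \<beta>_n (x^(n+s) - x^n).  Since x^(n+s) - x^n
  lies in H(0), which both automorphisms fix, the \<beta>'s add under composition, and \<beta> = 0 for
  all n means exactly that H(s) is fixed as well.\<close>

lemma lookup_scal [simp]: "Poly_Mapping.lookup (scal c v) a = c * Poly_Mapping.lookup v a"
  by (simp add: scal_def Poly_Mapping.map.rep_eq when_def)

lemma scal_1 [simp]: "scal 1 v = v"
  by (rule poly_mapping_eqI) simp

lemma scal_0 [simp]: "scal 0 v = 0"
  by (rule poly_mapping_eqI) simp

lemma scal_add_left: "scal a v + scal b v = scal (a + b) v"
  by (rule poly_mapping_eqI) (simp add: lookup_add algebra_simps)

lemma lookup_mon: "Poly_Mapping.lookup (mon n m) b = (if b = (n, m) then 1 else 0)"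
  by (auto simp: mon_def lookup_single when_def)

lemma sum_mon_eq:
  "(\<Sum>b\<in>Poly_Mapping.keys h. scal (Poly_Mapping.lookup h b) (mon (fst b) (snd b))) = h"
proof (rule poly_mapping_eqI)
  fix k :: "int \<times> nat"
  have "Poly_Mapping.lookup (\<Sum>b\<in>Poly_Mapping.keys h. scal (Poly_Mapping.lookup h b) (mon (fst b) (snd b))) k
     = (\<Sum>b\<in>Poly_Mapping.keys h. if b = k then Poly_Mapping.lookup h k else 0)"
    unfolding lookup_sum by (intro sum.cong refl) (auto simp: lookup_mon)
  also have "\<dots> = Poly_Mapping.lookup h k"
    by (cases "k \<in> Poly_Mapping.keys h") (auto simp: Poly_Mapping.in_keys_iff)
  finally show "Poly_Mapping.lookup (\<Sum>b\<in>Poly_Mapping.keys h. scal (Poly_Mapping.lookup h b) (mon (fst b) (snd b))) k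
     = Poly_Mapping.lookup h k" .
qed

lemma lookup_tensor:
  "Poly_Mapping.lookup (tensor u v) (b, c) = Poly_Mapping.lookup u b * Poly_Mapping.lookup v c"
proof -
  let ?uv = "Poly_Mapping.lookup u b * Poly_Mapping.lookup v c"
  have "Poly_Mapping.lookup (tensor u v) (b, c) = (\<Sum>b'\<in>Poly_Mapping.keys u.
      if b' = b then (\<Sum>c'\<in>Poly_Mapping.keys v. if c' = c then ?uv else 0) else 0)"
    unfolding tensor_def lookup_sum
    by (intro sum.cong refl) (auto simp: lookup_single when_def)
  also have "\<dots> = ?uv"
    by (cases "b \<in> Poly_Mapping.keys u"; cases "c \<in> Poly_Mapping.keys v")
      (auto simp: Poly_Mapping.in_keys_iff)
  finally show ?thesis .
qed

lemma lookup_comul_basis: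
  "Poly_Mapping.lookup (comul_basis q n m) ((a, i), (c, j)) =
     (if a = n \<and> i \<le> m \<and> c = n + int i \<and> j = m - i then qbinom q m i else 0)"
proof -
  have "Poly_Mapping.lookup (comul_basis q n m) ((a, i), (c, j)) = (\<Sum>i'\<le>m. if i' = i then
     (if a = n \<and> c = n + int i \<and> j = m - i then qbinom q m i else 0) else 0)"
    unfolding comul_basis_def lookup_sum
    by (intro sum.cong refl) (auto simp: lookup_single when_def)
  then show ?thesis by simp
qed

lemma keys_comul_basis:
  "Poly_Mapping.keys (comul_basis q n m) \<subseteq> (\<lambda>i. ((n, i), (n + int i, m - i))) ` {..m}"
proof
  fix x assume x: "x \<in> Poly_Mapping.keys (comul_basis q n m)"
  obtain a i c j where "x = ((a, i), (c, j))" by (metis prod.collapse)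
  with x show "x \<in> (\<lambda>i. ((n, i), (n + int i, m - i))) ` {..m}"
    by (auto simp: Poly_Mapping.in_keys_iff lookup_comul_basis split: if_splits)
qed

lemma comul_mon: "comul q (mon n m) = comul_basis q n m"
  by (simp add: comul_def mon_def)

lemma lookup_comul:
  "Poly_Mapping.lookup (comul q w) ((a, i), (c, j)) =
     (if c = a + int i then Poly_Mapping.lookup w (a, i + j) * qbinom q (i + j) i else 0)"
proof -
  have "Poly_Mapping.lookup (comul q w) ((a, i), (c, j)) = (\<Sum>b\<in>Poly_Mapping.keys w.
      if b = (a, i + j) then
        (if c = a + int i then Poly_Mapping.lookup w (a, i + j) * qbinom q (i + j) i else 0)
      else 0)"
    unfolding comul_def lookup_sum
    by (intro sum.cong refl) (auto simp: lookup_comul_basis)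
  then show ?thesis
    by (simp add: Poly_Mapping.in_keys_iff)
qed

lemma qbinom_eq_0_if_gt: "m < k \<Longrightarrow> qbinom q m k = 0"
proof (induction m arbitrary: k)
  case 0 then show ?case by (cases k) auto
next
  case (Suc m) then show ?case by (cases k) auto
qed

lemma qbinom_same [simp]: "qbinom q m m = 1"
  by (induction m) (auto simp: qbinom_eq_0_if_gt)

lemma qbinom_1: "qbinom q m 1 * (q - 1) = q ^ m - 1"
proof (induction m)
  case (Suc m)
  have "qbinom q (Suc m) 1 = 1 + q * qbinom q m 1" by (simp add: numeral_eq_Suc)
  with Suc show ?case by (simp add: algebra_simps)
qed simp

lemma qbinom_1_neq_0: "q ^ m \<noteq> 1 \<Longrightarrow> qbinom q m 1 \<noteq> 0"
  using qbinom_1[of q m] by auto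

lemma tmap_comul_mon:
  "tmap \<phi> (comul q (mon n m)) =
     (\<Sum>i\<le>m. scal (qbinom q m i) (tensor (\<phi> (mon n i)) (\<phi> (mon (n + int i) (m - i)))))"
proof -
  let ?e = "\<lambda>i. ((n, i), (n + int i, m - i))"
  have "inj_on ?e {..m}" by (auto simp: inj_on_def)
  have "tmap \<phi> (comul q (mon n m)) = (\<Sum>p\<in>?e ` {..m}.
      scal (Poly_Mapping.lookup (comul_basis q n m) p)
        (tensor (\<phi> (mon (fst (fst p)) (snd (fst p)))) (\<phi> (mon (fst (snd p)) (snd (snd p))))))"
    unfolding tmap_def comul_mon using keys_comul_basis[of q n m]
    by (intro sum.mono_neutral_left) (auto simp: Poly_Mapping.in_keys_iff)
  also have "\<dots> = (\<Sum>i\<le>m. scal (qbinom q m i) (tensor (\<phi> (mon n i)) (\<phi> (mon (n + int i) (m - i)))))"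
    using \<open>inj_on ?e {..m}\<close> by (simp add: sum.reindex lookup_comul_basis)
  finally show ?thesis .
qed

lemma lookup_tmap_comul_mon_fixing_below:
  assumes fix_below: "\<And>i m. i < s \<Longrightarrow> \<phi> (mon m i) = mon m i" and "1 \<le> s"
  shows "Poly_Mapping.lookup (tmap \<phi> (comul q (mon n s))) ((a, i), (c, j)) =
      (if (a, i) = (n, 0) then Poly_Mapping.lookup (\<phi> (mon n s)) (c, j) else 0)
    + (if (c, j) = (n + int s, 0) then Poly_Mapping.lookup (\<phi> (mon n s)) (a, i) else 0)
    + (if 1 \<le> i \<and> i < s \<and> a = n \<and> c = n + int i \<and> j = s - i then qbinom q s i else 0)"
proof -
  define g where "g k = scal (qbinom q s k) (tensor (\<phi> (mon n k)) (\<phi> (mon (n + int k) (s - k))))" for k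
  have "{..s} = insert 0 (insert s {1..<s})" using \<open>1 \<le> s\<close> by auto
  then have "tmap \<phi> (comul q (mon n s)) = g 0 + (g s + (\<Sum>k\<in>{1..<s}. g k))"
    using \<open>1 \<le> s\<close> by (simp add: tmap_comul_mon g_def)
  moreover have "Poly_Mapping.lookup (g 0) ((a, i), (c, j)) =
      (if (a, i) = (n, 0) then Poly_Mapping.lookup (\<phi> (mon n s)) (c, j) else 0)"
    using fix_below[of 0 n] \<open>1 \<le> s\<close> by (simp add: g_def lookup_tensor lookup_mon)
  moreover have "Poly_Mapping.lookup (g s) ((a, i), (c, j)) =
      (if (c, j) = (n + int s, 0) then Poly_Mapping.lookup (\<phi> (mon n s)) (a, i) else 0)"
    using fix_below[of 0 "n + int s"] \<open>1 \<le> s\<close> by (simp add: g_def lookup_tensor lookup_mon)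
  moreover have "Poly_Mapping.lookup (\<Sum>k\<in>{1..<s}. g k) ((a, i), (c, j)) = (\<Sum>k\<in>{1..<s}.
      if k = i then (if a = n \<and> c = n + int i \<and> j = s - i then qbinom q s i else 0) else 0)"
    unfolding lookup_sum
    by (intro sum.cong refl) (auto simp: g_def lookup_tensor lookup_mon fix_below)
  ultimately show ?thesis
    by (simp add: lookup_add)
qed

lemma coalgebra_image_mon_fixing_below:
  assumes fix_below: "\<And>i m. i < s \<Longrightarrow> \<phi> (mon m i) = mon m i"
    and comul_eq: "comul q (\<phi> (mon n s)) = tmap \<phi> (comul q (mon n s))"
    and "2 \<le> s" and "q ^ s \<noteq> 1"
  obtains \<beta> where "\<phi> (mon n s) = mon n s + scal \<beta> (mon (n + int s) 0 - mon n 0)"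
proof -
  define p where "p = Poly_Mapping.lookup (\<phi> (mon n s))"
  have coeff: "(if c = a + int i then p (a, i + j) * qbinom q (i + j) i else 0) =
      (if (a, i) = (n, 0) then p (c, j) else 0)
    + (if (c, j) = (n + int s, 0) then p (a, i) else 0)
    + (if 1 \<le> i \<and> i < s \<and> a = n \<and> c = n + int i \<and> j = s - i then qbinom q s i else 0)"
    for a i c j
  proof -
    have "Poly_Mapping.lookup (comul q (\<phi> (mon n s))) ((a, i), (c, j)) =
        Poly_Mapping.lookup (tmap \<phi> (comul q (mon n s))) ((a, i), (c, j))"
      by (simp only: comul_eq)
    moreover have "1 \<le> s" using \<open>2 \<le> s\<close> by simp
    ultimately show ?thesis
      unfolding p_def
      by (simp only: lookup_comul lookup_tmap_comul_mon_fixing_below[OF fix_below])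
  qed
  have off_n: "p (a, b) = 0" if "1 \<le> b" "a \<noteq> n" for a b
    using coeff[of a a 0 b] that by simp
  have off_degree: "p (a, b) = 0" if "1 \<le> b" "a + int b \<noteq> n + int s" for a b
    using coeff[of "a + int b" a b 0] that by (auto split: if_splits)
  have lead: "p (n, s) = 1"
    using coeff[of "n + 1" n 1 "s - 1"] \<open>2 \<le> s\<close> qbinom_1_neq_0[OF \<open>q ^ s \<noteq> 1\<close>]
    by (auto split: if_splits)
  have degree_0: "p (a, 0) = 0" if "a \<noteq> n" "a \<noteq> n + int s" for a
    using coeff[of a a 0 0] that by simp
  have ends: "p (n + int s, 0) + p (n, 0) = 0"
    using coeff[of "n + int s" n 0 0] \<open>2 \<le> s\<close> by simp
  have "\<phi> (mon n s) = mon n s + scal (p (n + int s, 0)) (mon (n + int s) 0 - mon n 0)"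
    (is "_ = ?rhs")
  proof (rule poly_mapping_eqI)
    fix k :: "int \<times> nat"
    obtain a b where k: "k = (a, b)" by (metis prod.collapse)
    show "Poly_Mapping.lookup (\<phi> (mon n s)) k = Poly_Mapping.lookup ?rhs k"
      unfolding k lookup_add lookup_scal lookup_minus lookup_mon p_def[symmetric]
      using off_n[of b a] off_degree[of b a] lead degree_0[of a] ends \<open>2 \<le> s\<close>
      by (cases "b = 0"; cases "a = n") (auto simp: add_eq_0_iff2)
  qed
  then show thesis by (rule that)
qed

lemma f_s_eqI:
  assumes "1 \<le> s" and "\<phi> (mon n s) = mon n s + scal \<beta> (mon (n + int s) 0 - mon n 0)"
  shows "f_s s \<phi> n = \<beta>"
proof -
  have "\<beta>' = \<beta>" if "\<phi> (mon n s) = mon n s + scal \<beta>' (mon (n + int s) 0 - mon n 0)" for \<beta>'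
  proof -
    have "mon n s + scal \<beta>' (mon (n + int s) 0 - mon n 0) =
        mon n s + scal \<beta> (mon (n + int s) 0 - mon n 0)"
      using that assms(2) by simp
    from arg_cong[OF this, of "\<lambda>t. Poly_Mapping.lookup t (n + int s, 0)"] \<open>1 \<le> s\<close>
    show ?thesis by (simp add: lookup_add lookup_minus lookup_mon)
  qed
  then show ?thesis
    unfolding f_s_def using assms(2) by (intro the_equality) auto
qed

lemma Hle_mono: "m \<le> m' \<Longrightarrow> Hle m \<subseteq> Hle m'"
  by (auto simp: Hle_def)

lemma mon_in_Hle: "i \<le> m \<Longrightarrow> mon n i \<in> Hle m"
  by (simp add: Hle_def mon_def)

lemma linear_H_sum:
  assumes "linear_H \<phi>" and "finite A"
  shows "\<phi> (\<Sum>b\<in>A. g b) = (\<Sum>b\<in>A. \<phi> (g b))"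
  using \<open>finite A\<close>
proof (induction A rule: finite_induct)
  case empty
  have "\<phi> 0 = \<phi> (scal 0 0)" by simp
  also have "\<dots> = 0" using \<open>linear_H \<phi>\<close> by (simp only: linear_H_def) simp
  finally show ?case by simp
next
  case (insert x F)
  with \<open>linear_H \<phi>\<close> show ?case by (simp add: linear_H_def)
qed

lemma linear_H_fixes_Hle:
  assumes "linear_H \<phi>" and fix_mon: "\<And>n i. i \<le> m \<Longrightarrow> \<phi> (mon n i) = mon n i"
    and "h \<in> Hle m"
  shows "\<phi> h = h"
proof -
  have "\<phi> h = (\<Sum>b\<in>Poly_Mapping.keys h. \<phi> (scal (Poly_Mapping.lookup h b) (mon (fst b) (snd b))))"
    by (subst sum_mon_eq[symmetric]) (simp add: linear_H_sum[OF \<open>linear_H \<phi>\<close>])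
  also have "\<dots> = (\<Sum>b\<in>Poly_Mapping.keys h. scal (Poly_Mapping.lookup h b) (mon (fst b) (snd b)))"
    using \<open>linear_H \<phi>\<close> \<open>h \<in> Hle m\<close> by (intro sum.cong refl) (auto simp: linear_H_def fix_mon Hle_def)
  finally show ?thesis
    by (simp only: sum_mon_eq)
qed

lemma Aut_m_linear: "\<phi> \<in> Aut_m q m \<Longrightarrow> linear_H \<phi>"
  by (simp add: Aut_m_def Aut_c_def coalg_map_def)

lemma Aut_m_fixes: "\<phi> \<in> Aut_m q m \<Longrightarrow> h \<in> Hle m \<Longrightarrow> \<phi> h = h"
  by (simp add: Aut_m_def)

lemma Aut_m_antimono: "m \<le> m' \<Longrightarrow> Aut_m q m' \<subseteq> Aut_m q m"
  using Hle_mono by (fastforce simp: Aut_m_def)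

lemma Aut_m_image_mon:
  assumes "\<phi> \<in> Aut_m q (s - 1)" and "2 \<le> s" and "q ^ s \<noteq> 1"
  shows "\<phi> (mon n s) = mon n s + scal (f_s s \<phi> n) (mon (n + int s) 0 - mon n 0)"
proof -
  have "\<phi> (mon m i) = mon m i" if "i < s" for i m
    using that assms(1) by (intro Aut_m_fixes mon_in_Hle) auto
  moreover have "comul q (\<phi> (mon n s)) = tmap \<phi> (comul q (mon n s))"
    using assms(1) by (simp add: Aut_m_def Aut_c_def coalg_map_def)
  ultimately obtain \<beta> where \<beta>: "\<phi> (mon n s) = mon n s + scal \<beta> (mon (n + int s) 0 - mon n 0)"
    using assms(2,3) by (rule coalgebra_image_mon_fixing_below)
  moreover have "f_s s \<phi> n = \<beta>"
    using \<beta> \<open>2 \<le> s\<close> by (intro f_s_eqI) auto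
  ultimately show ?thesis by simp
qed

lemma f_s_comp:
  assumes \<phi>: "\<phi> \<in> Aut_m q (s - 1)" and \<psi>: "\<psi> \<in> Aut_m q (s - 1)"
    and "2 \<le> s" and "q ^ s \<noteq> 1"
  shows "f_s s (\<phi> \<circ> \<psi>) n = f_s s \<phi> n + f_s s \<psi> n"
proof (rule f_s_eqI)
  let ?D = "mon (n + int s) 0 - mon n 0 :: 'a qH"
  have "?D \<in> Hle (s - 1)"
    by (auto simp: Hle_def Ball_def Poly_Mapping.in_keys_iff lookup_minus lookup_mon)
  then have fix_D: "\<phi> ?D = ?D"
    using \<phi> by (rule Aut_m_fixes[rotated])
  have "(\<phi> \<circ> \<psi>) (mon n s) = \<phi> (mon n s + scal (f_s s \<psi> n) ?D)"
    using Aut_m_image_mon[OF \<psi> assms(3,4)] by simp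
  also have "\<dots> = mon n s + scal (f_s s \<phi> n + f_s s \<psi> n) ?D"
    using Aut_m_linear[OF \<phi>]
    by (simp add: linear_H_def fix_D Aut_m_image_mon[OF \<phi> assms(3,4)] add.assoc scal_add_left)
  finally show "(\<phi> \<circ> \<psi>) (mon n s) = mon n s + scal (f_s s \<phi> n + f_s s \<psi> n) ?D" .
qed (use \<open>2 \<le> s\<close> in simp)

lemma f_s_eq_0_iff_Aut_m:
  assumes \<phi>: "\<phi> \<in> Aut_m q (s - 1)" and "2 \<le> s" and "q ^ s \<noteq> 1"
  shows "f_s s \<phi> = (\<lambda>n. 0) \<longleftrightarrow> \<phi> \<in> Aut_m q s"
proof
  assume "f_s s \<phi> = (\<lambda>n. 0)"
  then have "\<phi> (mon n i) = mon n i" if "i \<le> s" for n i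
    using that Aut_m_image_mon[OF assms, of n] Aut_m_fixes[OF \<phi> mon_in_Hle, of i n]
    by (cases "i = s") auto
  then have "\<forall>h\<in>Hle s. \<phi> h = h"
    using linear_H_fixes_Hle[OF Aut_m_linear[OF \<phi>]] by blast
  with \<phi> show "\<phi> \<in> Aut_m q s" by (simp add: Aut_m_def)
next
  assume "\<phi> \<in> Aut_m q s"
  then have "\<phi> (mon n s) = mon n s + scal 0 (mon (n + int s) 0 - mon n 0)" for n
    by (simp add: Aut_m_fixes mon_in_Hle)
  then show "f_s s \<phi> = (\<lambda>n. 0)"
    using \<open>2 \<le> s\<close> by (intro ext f_s_eqI) auto
qed

theorem lemma3p6:
  fixes q :: "'k::field" and s :: nat
  assumes "q \<noteq> 0" and "\<forall>n::nat. n > 0 \<longrightarrow> q ^ n \<noteq> 1"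
    and "s \<ge> 2"
  shows "(\<forall>\<phi>\<in>Aut_m q (s - 1). \<forall>\<psi>\<in>Aut_m q (s - 1).
            f_s s (\<phi> \<circ> \<psi>) = (\<lambda>n. f_s s \<phi> n + f_s s \<psi> n))
       \<and> {\<phi>\<in>Aut_m q (s - 1). f_s s \<phi> = (\<lambda>n. 0)} = Aut_m q s"
proof -
  have "q ^ s \<noteq> 1" using assms(2,3) by auto
  have "Aut_m q s \<subseteq> Aut_m q (s - 1)" by (rule Aut_m_antimono) simp
  with \<open>q ^ s \<noteq> 1\<close> \<open>s \<ge> 2\<close> show ?thesis
    using f_s_comp f_s_eq_0_iff_Aut_m by blast
qed

end
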